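(* Let $k\ge 2$ be an integer. Let $M$ be an $n\times n$ matrix with entries in $\{0,\pm1,\pm2,\dots,\pm\lfloor k/2\rfloor\}$ satisfying $M^T=-M$ and $MM^T=mI$, where $m\equiv -1\pmod k$. Let $C_k(M)$ be the $\mathbb{Z}_k$-code of length $2n$ with generator matrix $(I\ \ M)$, entries read modulo $k$. Let $a,b,c,d$ be integers with $a\equiv d\pmod k$ and $b\equiv c\pmod k$. Then $C_k(M)$ is a self-dual $\mathbb{Z}_k$-code, $A_k(C_k(M))$ is a unimodular lattice, and the $2n$ rows of the matrix \[ F(M)=\frac{1}{\sqrt{k}}\begin{pmatrix} aI+bM & cI+dM\\ -cI+dM & aI-bM\end{pmatrix} \] form a $\frac{1}{k}(a^2+mb^2+c^2+md^2)$-frame of $A_k(C_k(M))$.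
   Context: A $\mathbb{Z}_k$-code of length $N$ is a $\mathbb{Z}_k$-submodule of $\mathbb{Z}_k^N$; it is self-dual if it equals its dual under the standard inner product. Construction A: with $\rho:\mathbb{Z}_k\to\mathbb{Z}$ sending $0,1,\dots,k-1$ to $0,1,\dots,k-1$, for a $\mathbb{Z}_k$-code $C$ of length $N$ set $A_k(C)=\frac{1}{\sqrt{k}}\{\rho(C)+k\mathbb{Z}^N\}$. A lattice $L$ is unimodular if $L=L^*$ where $L^*=\{x:(x,y)\in\mathbb{Z}\ \forall y\in L\}$. For a lattice $L$ in dimension $N$, a set $\{f_1,\dots,f_N\}$ of vectors of $L$ with $(f_i,f_j)=t\,\delta_{i,j}$ is called a $t$-frame of $L$. *)

theory Defs
  imports Complex_Main
begin

text \<open>Vectors of length N are modelled as functions on nat that vanish at indices \<ge> N.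
  Elements of Z_k are represented by their residues 0,...,k-1 (so rho is the identity).\<close>

definition zk_space :: "int \<Rightarrow> nat \<Rightarrow> (nat \<Rightarrow> int) set" where
  "zk_space k N = {x. (\<forall>i<N. 0 \<le> x i \<and> x i < k) \<and> (\<forall>i\<ge>N. x i = 0)}"

definition zk_code :: "int \<Rightarrow> nat \<Rightarrow> (nat \<Rightarrow> int) set \<Rightarrow> bool" where
  "zk_code k N C \<longleftrightarrow> C \<subseteq> zk_space k N \<and> (\<lambda>_. 0) \<in> C
     \<and> (\<forall>x\<in>C. \<forall>y\<in>C. (\<lambda>i. (x i + y i) mod k) \<in> C)
     \<and> (\<forall>a x. x \<in> C \<longrightarrow> (\<lambda>i. (a * x i) mod k) \<in> C)"

definition zk_dual :: "int \<Rightarrow> nat \<Rightarrow> (nat \<Rightarrow> int) set \<Rightarrow> (nat \<Rightarrow> int) set" where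
  "zk_dual k N C = {x \<in> zk_space k N. \<forall>y\<in>C. (\<Sum>i<N. x i * y i) mod k = 0}"

definition self_dual_code :: "int \<Rightarrow> nat \<Rightarrow> (nat \<Rightarrow> int) set \<Rightarrow> bool" where
  "self_dual_code k N C \<longleftrightarrow> zk_code k N C \<and> C = zk_dual k N C"

definition code_gen :: "int \<Rightarrow> nat \<Rightarrow> nat \<Rightarrow> (nat \<Rightarrow> nat \<Rightarrow> int) \<Rightarrow> (nat \<Rightarrow> int) set" where
  "code_gen k n N G = {(\<lambda>j. if j < N then (\<Sum>r<n. u r * G r j) mod k else 0) | u. True}"

definition C_k :: "int \<Rightarrow> nat \<Rightarrow> (nat \<Rightarrow> nat \<Rightarrow> int) \<Rightarrow> (nat \<Rightarrow> int) set" where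
  "C_k k n M = code_gen k n (2*n)
      (\<lambda>r j. if j < n then (if j = r then 1 else 0) else M r (j - n))"

definition constrA :: "int \<Rightarrow> nat \<Rightarrow> (nat \<Rightarrow> int) set \<Rightarrow> (nat \<Rightarrow> real) set" where
  "constrA k N C = {x. \<exists>c\<in>C. \<exists>z::nat \<Rightarrow> int. (\<forall>i\<ge>N. z i = 0) \<and>
      x = (\<lambda>i. (of_int (c i) + of_int k * of_int (z i)) / sqrt (of_int k))}"

definition vinner :: "nat \<Rightarrow> (nat \<Rightarrow> real) \<Rightarrow> (nat \<Rightarrow> real) \<Rightarrow> real" where
  "vinner N x y = (\<Sum>i<N. x i * y i)"

definition lattice_dual :: "nat \<Rightarrow> (nat \<Rightarrow> real) set \<Rightarrow> (nat \<Rightarrow> real) set" where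
  "lattice_dual N L = {x. (\<forall>i\<ge>N. x i = 0) \<and> (\<forall>y\<in>L. vinner N x y \<in> \<int>)}"

definition unimodular :: "nat \<Rightarrow> (nat \<Rightarrow> real) set \<Rightarrow> bool" where
  "unimodular N L \<longleftrightarrow> L = lattice_dual N L"

definition is_frame :: "nat \<Rightarrow> (nat \<Rightarrow> real) set \<Rightarrow> real \<Rightarrow> (nat \<Rightarrow> nat \<Rightarrow> real) \<Rightarrow> bool" where
  "is_frame N L t f \<longleftrightarrow> (\<forall>i<N. f i \<in> L) \<and>
      (\<forall>i<N. \<forall>j<N. vinner N (f i) (f j) = (if i = j then t else 0))"

definition F_mat :: "int \<Rightarrow> nat \<Rightarrow> (nat \<Rightarrow> nat \<Rightarrow> int) \<Rightarrow> int \<Rightarrow> int \<Rightarrow> int \<Rightarrow> int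
    \<Rightarrow> nat \<Rightarrow> nat \<Rightarrow> real" where
  "F_mat k n M a b c d i j =
     (let dl = (\<lambda>p q. if p = q then 1 else 0 :: int);
          e = (if i < n \<and> j < n then a * dl i j + b * M i j
               else if i < n \<and> n \<le> j \<and> j < 2*n then c * dl i (j-n) + d * M i (j-n)
               else if n \<le> i \<and> i < 2*n \<and> j < n then - c * dl (i-n) j + d * M (i-n) j
               else if n \<le> i \<and> i < 2*n \<and> n \<le> j \<and> j < 2*n
                    then a * dl (i-n) (j-n) - b * M (i-n) (j-n)
               else 0)
      in of_int e / sqrt (of_int k))"

end

theory Submission
  imports Defs "HOL-Number_Theory.Cong"
begin

text \<open>A codeword of \<open>C_k(M)\<close> is \<open>(u, uM)\<close> reduced mod \<open>k\<close>. Skewness and \<open>MM\<^sup>T = mI\<close> give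
  \<open>uM\<cdot>vM = m u\<cdot>v\<close>, \<open>x\<cdot>uM = -u\<cdot>xM\<close> and \<open>(uM)M = -mu\<close>. As \<open>m \<equiv> -1\<close>, codewords are
  pairwise orthogonal; conversely, if \<open>(x, y)\<close> is orthogonal to the code, testing against unit
  vectors \<open>u\<close> gives \<open>x \<equiv> yM\<close>, hence \<open>xM \<equiv> -my \<equiv> y\<close> and \<open>(x, y)\<close> is the codeword of \<open>x\<close>.
  Construction A turns any self-dual code into a unimodular lattice. Finally, the rows of
  \<open>\<surd>k F(M)\<close> are \<open>(u, v)\<close> with \<open>u = a e\<^sub>i + b M\<^sub>i\<close> (resp. \<open>-c e\<^sub>i + d M\<^sub>i\<close>), and
  \<open>uM = a M\<^sub>i - mb e\<^sub>i \<equiv> d M\<^sub>i + c e\<^sub>i = v\<close> (resp. \<open>\<equiv> -b M\<^sub>i + a e\<^sub>i = v\<close>), so they reduce to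
  codewords; their Gram matrix is \<open>(a\<^sup>2 + mb\<^sup>2 + c\<^sup>2 + md\<^sup>2) I\<close> by \<open>MM\<^sup>T = mI\<close> and skewness.\<close>

lemma sum_lessThan_double:
  fixes f :: "nat \<Rightarrow> 'a::comm_monoid_add"
  shows "(\<Sum>l<2*n. f l) = (\<Sum>l<n. f l) + (\<Sum>l<n. f (n + l))"
proof -
  have "(\<Sum>l<2*n. f l) = sum f {0..<n} + sum f {n..<n+n}"
    by (simp add: lessThan_atLeast0 mult_2 sum.atLeastLessThan_concat)
  also have "sum f {n..<n+n} = (\<Sum>l<n. f (n + l))"
    using sum.shift_bounds_nat_ivl[of f 0 n n] by (simp add: lessThan_atLeast0 add.commute)
  finally show ?thesis by (simp add: lessThan_atLeast0)
qed

lemma less_double_cases: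
  assumes "i < 2*(n::nat)"
  obtains "i < n" | i' where "i = n + i'" "i' < n"
proof (cases "i < n")
  case False
  then show thesis using assms that(2)[of "i - n"] by simp
qed (rule that(1))

lemma index_cases_double:
  fixes l n :: nat
  obtains "l < n" | j where "l = n + j" "j < n" | "2*n \<le> l"
  by (metis less_double_cases not_le)

lemma sum_of_bool_mult:
  fixes f :: "nat \<Rightarrow> 'a::comm_semiring_1"
  shows "i < n \<Longrightarrow> (\<Sum>l<n. of_bool (i = l) * f l) = f i"
  by simp

section \<open>Construction A of a self-dual code\<close>

lemma vinner_scaled_int:
  fixes k :: int
  assumes "k \<ge> 0"
  shows "vinner N (\<lambda>l. of_int (x l) / sqrt (of_int k)) (\<lambda>l. of_int (y l) / sqrt (of_int k))
    = of_int (\<Sum>l<N. x l * y l) / of_int k"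
proof -
  have "sqrt (of_int k) * sqrt (of_int k) = (of_int k :: real)"
    using assms by simp
  then show ?thesis
    by (simp add: vinner_def sum_divide_distrib times_divide_times_eq)
qed

lemma of_int_divide_in_Ints_iff:
  assumes "k \<noteq> 0"
  shows "(of_int s / of_int k :: real) \<in> \<int> \<longleftrightarrow> k dvd s"
proof
  assume "of_int s / of_int k \<in> (\<int> :: real set)"
  then obtain q where "of_int s / of_int k = (of_int q :: real)"
    by (auto elim: Ints_cases)
  then have "s = k * q"
    using assms by (simp add: field_simps flip: of_int_mult)
  then show "k dvd s" ..
qed (use assms in auto)

lemma mem_constrA_E:
  assumes "x \<in> constrA k N C"
  obtains c z where "c \<in> C" "\<And>l. N \<le> l \<Longrightarrow> z l = 0"
    "x = (\<lambda>l. of_int (c l + k * z l) / sqrt (of_int k))"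
proof -
  from assms obtain c z where "c \<in> C" "\<forall>l\<ge>N. z l = 0"
    "x = (\<lambda>l. (of_int (c l) + of_int k * of_int (z l)) / sqrt (of_int k))"
    unfolding constrA_def by blast
  then show thesis using that[of c z] by simp
qed

lemma scaled_mem_constrA:
  assumes "c \<in> C" "\<And>l. [x l = c l] (mod k)" "\<And>l. N \<le> l \<Longrightarrow> x l = 0" "\<And>l. N \<le> l \<Longrightarrow> c l = 0"
  shows "(\<lambda>l. of_int (x l) / sqrt (of_int k)) \<in> constrA k N C"
proof -
  define z where "z l = (x l - c l) div k" for l
  have "x l = c l + k * z l" for l
    using assms(2)[of l] by (simp add: z_def cong_iff_dvd_diff)
  moreover have "\<forall>l\<ge>N. z l = 0"
    using assms(3,4) by (simp add: z_def)
  ultimately show ?thesis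
    unfolding constrA_def using assms(1) by (intro CollectI bexI[of _ c] exI[of _ z]) auto
qed

lemma self_dual_code_orthogonal:
  assumes "self_dual_code k N C" "c \<in> C" "c' \<in> C"
  shows "k dvd (\<Sum>l<N. c l * c' l)"
  using assms unfolding self_dual_code_def zk_dual_def by (auto simp: mod_eq_0_iff_dvd)

lemma self_dual_code_vanishes:
  assumes "self_dual_code k N C" "c \<in> C" "N \<le> l"
  shows "c l = 0"
  using assms unfolding self_dual_code_def zk_code_def zk_space_def by auto

lemma constrA_subset_lattice_dual:
  assumes "k > 0" "self_dual_code k N C"
  shows "constrA k N C \<subseteq> lattice_dual N (constrA k N C)"
proof
  fix x assume "x \<in> constrA k N C"
  then obtain c z where c: "c \<in> C" and z: "\<And>l. N \<le> l \<Longrightarrow> z l = 0"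
    and x: "x = (\<lambda>l. of_int (c l + k * z l) / sqrt (of_int k))"
    by (blast elim: mem_constrA_E)
  have "vinner N x y \<in> \<int>" if "y \<in> constrA k N C" for y
  proof -
    from that obtain c' z' where c': "c' \<in> C"
      and y: "y = (\<lambda>l. of_int (c' l + k * z' l) / sqrt (of_int k))"
      by (blast elim: mem_constrA_E)
    have "[(\<Sum>l<N. (c l + k * z l) * (c' l + k * z' l)) = (\<Sum>l<N. c l * c' l)] (mod k)"
      by (intro cong_sum cong_mult) (simp_all add: cong_def)
    then have "k dvd (\<Sum>l<N. (c l + k * z l) * (c' l + k * z' l))"
      using self_dual_code_orthogonal[OF assms(2) c c'] by (simp add: cong_dvd_iff)
    then show ?thesis
      using assms(1) unfolding x y by (simp only: vinner_scaled_int of_int_divide_in_Ints_iff less_imp_le)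
  qed
  moreover have "x l = 0" if "N \<le> l" for l
    using that z self_dual_code_vanishes[OF assms(2) c] by (simp add: x)
  ultimately show "x \<in> lattice_dual N (constrA k N C)"
    unfolding lattice_dual_def by blast
qed

lemma lattice_dual_constrA_integral:
  assumes "k > 0" "(\<lambda>_. 0) \<in> C" "x \<in> lattice_dual N (constrA k N C)"
  shows "x = (\<lambda>l. of_int \<lfloor>x l * sqrt (of_int k)\<rfloor> / sqrt (of_int k))"
proof
  fix l
  have "x l * sqrt (of_int k) \<in> \<int>"
  proof (cases "l < N")
    case True
    \<comment> \<open>pair \<open>x\<close> with the lattice vector \<open>\<surd>k e\<^sub>l\<close>, which comes from the zero codeword\<close>
    define e where "e j = (if j = l then k else 0)" for j
    have "(\<lambda>j. of_int (e j) / sqrt (of_int k)) \<in> constrA k N C"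
      using assms(2) True by (intro scaled_mem_constrA) (auto simp: e_def cong_def)
    then have "vinner N x (\<lambda>j. of_int (e j) / sqrt (of_int k)) \<in> \<int>"
      using assms(3) unfolding lattice_dual_def by blast
    moreover have "vinner N x (\<lambda>j. of_int (e j) / sqrt (of_int k)) = x l * sqrt (of_int k)"
    proof -
      have "vinner N x (\<lambda>j. of_int (e j) / sqrt (of_int k))
          = (\<Sum>j<N. if j = l then x l * (of_int k / sqrt (of_int k)) else 0)"
        unfolding vinner_def by (intro sum.cong) (auto simp: e_def)
      also have "\<dots> = x l * (of_int k / sqrt (of_int k))"
        using True by simp
      also have "of_int k / sqrt (of_int k) = sqrt (of_int k)"
        using assms(1) by (simp add: real_div_sqrt)
      finally show ?thesis .
    qed
    ultimately show ?thesis by simp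
  next
    case False
    then show ?thesis using assms(3) unfolding lattice_dual_def by simp
  qed
  then show "x l = of_int \<lfloor>x l * sqrt (of_int k)\<rfloor> / sqrt (of_int k)"
    using assms(1) by (auto elim!: Ints_cases)
qed

lemma lattice_dual_subset_constrA:
  assumes "k > 0" "self_dual_code k N C"
  shows "lattice_dual N (constrA k N C) \<subseteq> constrA k N C"
proof
  fix x assume x: "x \<in> lattice_dual N (constrA k N C)"
  have zero: "(\<lambda>_. 0) \<in> C"
    using assms(2) unfolding self_dual_code_def zk_code_def by blast
  define w where "w l = \<lfloor>x l * sqrt (of_int k)\<rfloor>" for l
  have x_eq: "x = (\<lambda>l. of_int (w l) / sqrt (of_int k))"
    unfolding w_def by (rule lattice_dual_constrA_integral[OF assms(1) zero x])
  have w_beyond: "w l = 0" if "N \<le> l" for l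
    using x that unfolding lattice_dual_def w_def by simp
  have "(\<lambda>l. w l mod k) \<in> zk_dual k N C"
  proof -
    have "(\<Sum>l<N. w l mod k * c l) mod k = 0" if c: "c \<in> C" for c
    proof -
      have "(\<lambda>l. of_int (c l) / sqrt (of_int k)) \<in> constrA k N C"
        using self_dual_code_vanishes[OF assms(2) c] by (intro scaled_mem_constrA[OF c]) simp_all
      then have "vinner N x (\<lambda>l. of_int (c l) / sqrt (of_int k)) \<in> \<int>"
        using x unfolding lattice_dual_def by blast
      then have "k dvd (\<Sum>l<N. w l * c l)"
        using assms(1) unfolding x_eq by (simp only: vinner_scaled_int of_int_divide_in_Ints_iff less_imp_le)
      moreover have "[(\<Sum>l<N. w l mod k * c l) = (\<Sum>l<N. w l * c l)] (mod k)"
        by (intro cong_sum cong_mult) (simp_all add: cong_def)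
      ultimately show ?thesis
        by (simp add: cong_dvd_iff mod_eq_0_iff_dvd)
    qed
    then show ?thesis
      using assms(1) w_beyond by (auto simp: zk_dual_def zk_space_def)
  qed
  then have "(\<lambda>l. w l mod k) \<in> C"
    using assms(2) unfolding self_dual_code_def by blast
  moreover have "[w l = w l mod k] (mod k)" for l
    by (simp add: cong_def)
  ultimately show "x \<in> constrA k N C"
    unfolding x_eq using w_beyond by (intro scaled_mem_constrA[of "\<lambda>l. w l mod k"]) simp_all
qed

theorem unimodular_constrA_self_dual:
  assumes "k > 0" "self_dual_code k N C"
  shows "unimodular N (constrA k N C)"
  unfolding unimodular_def
  using constrA_subset_lattice_dual[OF assms] lattice_dual_subset_constrA[OF assms] by blast

section \<open>Skew matrices with \<open>MM\<^sup>T = mI\<close>\<close>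

definition vec_mat :: "nat \<Rightarrow> (nat \<Rightarrow> int) \<Rightarrow> (nat \<Rightarrow> nat \<Rightarrow> int) \<Rightarrow> nat \<Rightarrow> int" where
  "vec_mat n u M j = (\<Sum>r<n. u r * M r j)"

definition join_vec :: "nat \<Rightarrow> (nat \<Rightarrow> int) \<Rightarrow> (nat \<Rightarrow> int) \<Rightarrow> nat \<Rightarrow> int" where
  "join_vec n x y l = (if l < n then x l else if l < 2*n then y (l - n) else 0)"

lemma vec_mat_cong:
  assumes "\<And>r. r < n \<Longrightarrow> [u r = v r] (mod k)"
  shows "[vec_mat n u M j = vec_mat n v M j] (mod k)"
  unfolding vec_mat_def using assms by (intro cong_sum cong_mult cong_refl) simp

lemma join_vec_beyond: "2*n \<le> l \<Longrightarrow> join_vec n x y l = 0"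
  by (simp add: join_vec_def)

lemma sum_join_vec_mult:
  "(\<Sum>l<2*n. join_vec n x y l * join_vec n x' y' l) = (\<Sum>l<n. x l * x' l) + (\<Sum>l<n. y l * y' l)"
  by (simp add: sum_lessThan_double join_vec_def)

locale skew_orthogonal =
  fixes n :: nat and m :: int and M :: "nat \<Rightarrow> nat \<Rightarrow> int"
  assumes skew: "\<And>i j. i < n \<Longrightarrow> j < n \<Longrightarrow> M j i = - M i j"
    and orthogonal: "\<And>i j. i < n \<Longrightarrow> j < n \<Longrightarrow> (\<Sum>l<n. M i l * M j l) = of_bool (i = j) * m"
begin

lemma diag_eq_0: "i < n \<Longrightarrow> M i i = 0"
  using skew[of i i] by simp

lemma sum_mult_transposed:
  assumes "i < n" "j < n"
  shows "(\<Sum>r<n. M i r * M r j) = - (of_bool (i = j) * m)"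
proof -
  have "(\<Sum>r<n. M i r * M r j) = (\<Sum>r<n. - (M i r * M j r))"
  proof (rule sum.cong)
    fix r assume "r \<in> {..<n}"
    then show "M i r * M r j = - (M i r * M j r)" using skew[of j r] assms by simp
  qed simp
  then show ?thesis using orthogonal[OF assms] by (simp add: sum_negf)
qed

lemma vec_mat_vec_mat:
  assumes "j < n"
  shows "vec_mat n (vec_mat n u M) M j = - m * u j"
proof -
  have "vec_mat n (vec_mat n u M) M j = (\<Sum>r<n. \<Sum>s<n. u s * (M s r * M r j))"
    by (simp add: vec_mat_def sum_distrib_right mult.assoc)
  also have "\<dots> = (\<Sum>s<n. u s * (\<Sum>r<n. M s r * M r j))"
    by (subst sum.swap) (simp add: sum_distrib_left)
  also have "\<dots> = (\<Sum>s<n. of_bool (j = s) * (- m * u s))"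
    by (intro sum.cong refl) (auto simp: sum_mult_transposed assms)
  also have "\<dots> = - m * u j"
    using assms by (rule sum_of_bool_mult)
  finally show ?thesis .
qed

lemma sum_vec_mat_mult: "(\<Sum>j<n. vec_mat n u M j * vec_mat n v M j) = m * (\<Sum>r<n. u r * v r)"
proof -
  have "(\<Sum>j<n. vec_mat n u M j * vec_mat n v M j) = (\<Sum>j<n. \<Sum>r<n. \<Sum>s<n. u r * v s * (M r j * M s j))"
    by (simp add: vec_mat_def sum_product algebra_simps)
  also have "\<dots> = (\<Sum>r<n. \<Sum>j<n. \<Sum>s<n. u r * v s * (M r j * M s j))"
    by (rule sum.swap)
  also have "\<dots> = (\<Sum>r<n. \<Sum>s<n. \<Sum>j<n. u r * v s * (M r j * M s j))"
    by (rule sum.cong[OF refl], rule sum.swap)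
  also have "\<dots> = (\<Sum>r<n. \<Sum>s<n. of_bool (r = s) * (u r * v s * m))"
    by (intro sum.cong refl) (simp add: sum_distrib_left[symmetric] orthogonal)
  also have "\<dots> = (\<Sum>r<n. u r * v r * m)"
    by (intro sum.cong refl) (simp only: lessThan_iff sum_of_bool_mult)
  finally show ?thesis
    by (simp add: sum_distrib_left algebra_simps)
qed

lemma sum_mult_vec_mat: "(\<Sum>j<n. x j * vec_mat n u M j) = - (\<Sum>r<n. u r * vec_mat n x M r)"
proof -
  have "(\<Sum>j<n. x j * vec_mat n u M j) = (\<Sum>j<n. \<Sum>r<n. u r * (x j * M r j))"
    by (simp add: vec_mat_def sum_distrib_left algebra_simps)
  also have "\<dots> = (\<Sum>r<n. \<Sum>j<n. u r * (x j * M r j))"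
    by (rule sum.swap)
  also have "\<dots> = (\<Sum>r<n. \<Sum>j<n. - (u r * (x j * M j r)))"
  proof (intro sum.cong refl)
    fix r j assume "r \<in> {..<n}" "j \<in> {..<n}"
    then show "u r * (x j * M r j) = - (u r * (x j * M j r))" using skew[of j r] by simp
  qed
  finally show ?thesis
    by (simp add: vec_mat_def sum_negf sum_distrib_left)
qed

definition row_comb :: "int \<Rightarrow> int \<Rightarrow> nat \<Rightarrow> nat \<Rightarrow> int" where
  "row_comb \<alpha> \<beta> i l = \<alpha> * of_bool (i = l) + \<beta> * M i l"

lemma vec_mat_row_comb:
  assumes "i < n" "j < n"
  shows "vec_mat n (row_comb \<alpha> \<beta> i) M j = \<alpha> * M i j - \<beta> * (of_bool (i = j) * m)"
proof -
  have "vec_mat n (row_comb \<alpha> \<beta> i) M j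
      = \<alpha> * (\<Sum>r<n. of_bool (i = r) * M r j) + \<beta> * (\<Sum>r<n. M i r * M r j)"
    by (simp add: vec_mat_def row_comb_def algebra_simps sum.distrib sum_distrib_left
        del: sum_of_bool_mult_eq sum_mult_of_bool_eq)
  then show ?thesis by (simp only: sum_of_bool_mult sum_mult_transposed assms)
qed

lemma sum_row_comb_mult:
  assumes "i < n" "j < n"
  shows "(\<Sum>l<n. row_comb \<alpha> \<beta> i l * row_comb \<gamma> \<delta> j l)
    = of_bool (i = j) * (\<alpha> * \<gamma> + m * \<beta> * \<delta>) + (\<beta> * \<gamma> - \<alpha> * \<delta>) * M i j"
proof -
  have "(\<Sum>l<n. row_comb \<alpha> \<beta> i l * row_comb \<gamma> \<delta> j l)
      = (\<Sum>l<n. of_bool (i = l) * (\<alpha> * \<gamma> * of_bool (j = l) + \<alpha> * \<delta> * M j l))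
        + (\<Sum>l<n. of_bool (j = l) * (\<beta> * \<gamma> * M i l)) + \<beta> * \<delta> * (\<Sum>l<n. M i l * M j l)"
    by (simp add: row_comb_def algebra_simps sum.distrib sum_distrib_left)
  also have "\<dots> = \<alpha> * \<gamma> * of_bool (j = i) + \<alpha> * \<delta> * M j i + \<beta> * \<gamma> * M i j + \<beta> * \<delta> * (of_bool (i = j) * m)"
    using assms by (simp only: sum_of_bool_mult orthogonal)
  also have "\<dots> = of_bool (i = j) * (\<alpha> * \<gamma> + m * \<beta> * \<delta>) + (\<beta> * \<gamma> - \<alpha> * \<delta>) * M i j"
  proof (cases "i = j")
    case True
    then show ?thesis using diag_eq_0[OF assms(2)] by simp
  next
    case False
    then show ?thesis using skew[OF assms] by (simp add: algebra_simps)
  qed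
  finally show ?thesis .
qed

definition frame_row :: "int \<Rightarrow> int \<Rightarrow> int \<Rightarrow> int \<Rightarrow> nat \<Rightarrow> nat \<Rightarrow> int" where
  "frame_row a b c d i =
    (if i < n then join_vec n (row_comb a b i) (row_comb c d i)
     else join_vec n (row_comb (- c) d (i - n)) (row_comb a (- b) (i - n)))"

lemma F_mat_eq_frame_row:
  "i < 2*n \<Longrightarrow> F_mat k n M a b c d i = (\<lambda>l. of_int (frame_row a b c d i l) / sqrt (of_int k))"
  by (auto simp: fun_eq_iff F_mat_def frame_row_def join_vec_def row_comb_def of_bool_def Let_def)

lemma sum_join_row_comb_mult:
  assumes "i < n" "j < n"
  shows "(\<Sum>l<2*n. join_vec n (row_comb \<alpha> \<beta> i) (row_comb \<gamma> \<delta> i) l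
        * join_vec n (row_comb \<alpha>' \<beta>' j) (row_comb \<gamma>' \<delta>' j) l)
    = of_bool (i = j) * (\<alpha> * \<alpha>' + m * \<beta> * \<beta>' + \<gamma> * \<gamma>' + m * \<delta> * \<delta>')
      + (\<beta> * \<alpha>' - \<alpha> * \<beta>' + \<delta> * \<gamma>' - \<gamma> * \<delta>') * M i j"
  by (simp only: sum_join_vec_mult sum_row_comb_mult assms) (simp add: algebra_simps)

lemma frame_row_upper: "i < n \<Longrightarrow> frame_row a b c d i = join_vec n (row_comb a b i) (row_comb c d i)"
  by (simp add: frame_row_def)

lemma frame_row_lower:
  "frame_row a b c d (n + i) = join_vec n (row_comb (- c) d i) (row_comb a (- b) i)"
  by (simp add: frame_row_def)

lemma sum_frame_row_mult:
  assumes "i < 2*n" "j < 2*n"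
  shows "(\<Sum>l<2*n. frame_row a b c d i l * frame_row a b c d j l)
    = of_bool (i = j) * (a^2 + m * b^2 + c^2 + m * d^2)"
  using assms
  by (elim less_double_cases;
      simp only: frame_row_upper frame_row_lower sum_join_row_comb_mult add_left_cancel;
      simp add: power2_eq_square algebra_simps)

end

section \<open>The code \<open>C\<^sub>k(M)\<close> and the frame \<open>F(M)\<close>\<close>

locale skew_orthogonal_mod = skew_orthogonal +
  fixes k :: int
  assumes modulus_pos: "k > 0"
    and m_cong: "[m = -1] (mod k)"
begin

lemma neg_m_cong: "[- m = 1] (mod k)"
  using m_cong cong_minus_minus_iff[of m "- 1" k] by simp

definition codeword :: "(nat \<Rightarrow> int) \<Rightarrow> nat \<Rightarrow> int" where
  "codeword u l = join_vec n u (vec_mat n u M) l mod k"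

lemma C_k_eq_range_codeword: "C_k k n M = range codeword"
proof -
  have "(\<lambda>l. if l < 2*n then (\<Sum>r<n. u r * (if l < n then (if l = r then 1 else 0) else M r (l - n))) mod k
      else 0) = codeword u" for u
  proof
    fix l
    show "(if l < 2*n then (\<Sum>r<n. u r * (if l < n then (if l = r then 1 else 0) else M r (l - n))) mod k
      else 0) = codeword u l"
      by (simp add: codeword_def join_vec_def vec_mat_def if_distrib[of "\<lambda>t. _ * t"] cong: if_cong)
  qed
  then show ?thesis
    unfolding C_k_def code_gen_def by (simp add: full_SetCompr_eq)
qed

lemma codeword_low: "l < n \<Longrightarrow> codeword u l = u l mod k"
  by (simp add: codeword_def join_vec_def)

lemma codeword_high: "j < n \<Longrightarrow> codeword u (n + j) = vec_mat n u M j mod k"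
  by (simp add: codeword_def join_vec_def)

lemma codeword_in_zk_space: "codeword u \<in> zk_space k (2*n)"
  using modulus_pos by (simp add: zk_space_def codeword_def join_vec_beyond)

lemma zk_code_range_codeword: "zk_code k (2*n) (range codeword)"
  unfolding zk_code_def
proof (intro conjI ballI allI impI)
  show "range codeword \<subseteq> zk_space k (2*n)"
    using codeword_in_zk_space by blast
  show "(\<lambda>_. 0) \<in> range codeword"
    by (rule range_eqI[of _ _ "\<lambda>_. 0"]) (simp add: fun_eq_iff codeword_def join_vec_def vec_mat_def)
next
  fix x y assume "x \<in> range codeword" "y \<in> range codeword"
  then obtain u v where "x = codeword u" "y = codeword v" by blast
  then show "(\<lambda>l. (x l + y l) mod k) \<in> range codeword"
    by (intro range_eqI[of _ _ "\<lambda>r. u r + v r"])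
      (simp add: fun_eq_iff codeword_def join_vec_def vec_mat_def mod_add_eq distrib_right sum.distrib)
next
  fix a x assume "x \<in> range codeword"
  then obtain u where "x = codeword u" by blast
  then show "(\<lambda>l. (a * x l) mod k) \<in> range codeword"
    by (intro range_eqI[of _ _ "\<lambda>r. a * u r"])
      (simp add: fun_eq_iff codeword_def join_vec_def vec_mat_def mod_mult_right_eq sum_distrib_left mult.assoc)
qed

lemma sum_mult_codeword_cong:
  "[(\<Sum>l<2*n. x l * codeword u l) = (\<Sum>l<n. x l * u l) + (\<Sum>j<n. x (n + j) * vec_mat n u M j)] (mod k)"
  unfolding sum_lessThan_double
  by (intro cong_add cong_sum cong_mult cong_refl) (simp_all add: codeword_low codeword_high cong_def)

lemma codeword_orthogonal: "k dvd (\<Sum>l<2*n. codeword u l * codeword v l)"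
proof -
  have "[(\<Sum>l<2*n. codeword u l * codeword v l)
      = (\<Sum>l<n. codeword u l * v l) + (\<Sum>j<n. codeword u (n + j) * vec_mat n v M j)] (mod k)"
    by (rule sum_mult_codeword_cong)
  also have "[(\<Sum>l<n. codeword u l * v l) + (\<Sum>j<n. codeword u (n + j) * vec_mat n v M j)
      = (\<Sum>l<n. u l * v l) + (\<Sum>j<n. vec_mat n u M j * vec_mat n v M j)] (mod k)"
    by (intro cong_add cong_sum cong_mult cong_refl) (simp_all add: codeword_low codeword_high cong_def)
  also have "(\<Sum>l<n. u l * v l) + (\<Sum>j<n. vec_mat n u M j * vec_mat n v M j) = (1 + m) * (\<Sum>l<n. u l * v l)"
    by (simp add: sum_vec_mat_mult algebra_simps)
  also have "[(1 + m) * (\<Sum>l<n. u l * v l) = (1 + -1) * (\<Sum>l<n. u l * v l)] (mod k)"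
    using m_cong by (intro cong_mult cong_add cong_refl)
  finally show ?thesis
    by (simp add: cong_0_iff)
qed

lemma zk_dual_subset_range_codeword: "zk_dual k (2*n) (range codeword) \<subseteq> range codeword"
proof
  fix x assume x: "x \<in> zk_dual k (2*n) (range codeword)"
  define y where "y j = x (n + j)" for j
  have x_low: "[x r = vec_mat n y M r] (mod k)" if r: "r < n" for r
  proof -
    define e :: "nat \<Rightarrow> int" where "e s = of_bool (r = s)" for s
    have "[0 = (\<Sum>l<2*n. x l * codeword e l)] (mod k)"
      using x by (auto simp: zk_dual_def cong_def)
    also have "[(\<Sum>l<2*n. x l * codeword e l) = (\<Sum>l<n. x l * e l) + (\<Sum>j<n. y j * vec_mat n e M j)] (mod k)"
      unfolding y_def by (rule sum_mult_codeword_cong)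
    also have "(\<Sum>l<n. x l * e l) + (\<Sum>j<n. y j * vec_mat n e M j) = x r - vec_mat n y M r"
      using r by (simp add: sum_mult_vec_mat[of y e] e_def)
    finally show ?thesis
      by (simp add: cong_iff_dvd_diff dvd_diff_commute)
  qed
  have "x = codeword x"
  proof
    fix l
    have x_range: "0 \<le> x l \<and> x l < k" if "l < 2*n"
      using x that by (simp add: zk_dual_def zk_space_def)
    show "x l = codeword x l"
    proof (cases rule: index_cases_double[of l n])
      case 1
      then show ?thesis using x_range by (simp add: codeword_low)
    next
      case (2 j)
      have "[vec_mat n x M j = vec_mat n (vec_mat n y M) M j] (mod k)"
        by (rule vec_mat_cong[OF x_low])
      also have "vec_mat n (vec_mat n y M) M j = - m * y j"
        using 2(2) by (rule vec_mat_vec_mat)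
      also have "[- m * y j = 1 * y j] (mod k)"
        using neg_m_cong by (intro cong_mult cong_refl)
      finally show ?thesis
        using 2 x_range by (simp add: codeword_high y_def cong_def)
    next
      case 3
      then show ?thesis using x by (simp add: zk_dual_def zk_space_def codeword_def join_vec_beyond)
    qed
  qed
  then show "x \<in> range codeword" by blast
qed

theorem self_dual_code_C_k: "self_dual_code k (2*n) (C_k k n M)"
proof -
  have "range codeword \<subseteq> zk_dual k (2*n) (range codeword)"
    using codeword_in_zk_space codeword_orthogonal by (auto simp: zk_dual_def dvd_eq_mod_eq_0)
  then show ?thesis
    unfolding self_dual_code_def C_k_eq_range_codeword
    using zk_code_range_codeword zk_dual_subset_range_codeword by blast
qed

lemma join_row_comb_in_constrA:
  assumes "i < n" "[\<gamma> = \<beta>] (mod k)" "[\<delta> = \<alpha>] (mod k)"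
  shows "(\<lambda>l. of_int (join_vec n (row_comb \<alpha> \<beta> i) (row_comb \<gamma> \<delta> i) l) / sqrt (of_int k))
    \<in> constrA k (2*n) (C_k k n M)"
proof (rule scaled_mem_constrA)
  show "codeword (row_comb \<alpha> \<beta> i) \<in> C_k k n M"
    by (simp add: C_k_eq_range_codeword)
  fix l
  show "join_vec n (row_comb \<alpha> \<beta> i) (row_comb \<gamma> \<delta> i) l = 0" if "2*n \<le> l"
    using that by (rule join_vec_beyond)
  show "codeword (row_comb \<alpha> \<beta> i) l = 0" if "2*n \<le> l"
    using that codeword_in_zk_space unfolding zk_space_def by blast
  show "[join_vec n (row_comb \<alpha> \<beta> i) (row_comb \<gamma> \<delta> i) l = codeword (row_comb \<alpha> \<beta> i) l] (mod k)"
  proof (cases rule: index_cases_double[of l n])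
    case 1
    then show ?thesis by (simp add: join_vec_def codeword_low cong_def)
  next
    case (2 j)
    have "[\<beta> * - m = \<gamma>] (mod k)"
      using cong_mult[OF cong_refl[of \<beta>] neg_m_cong] cong_sym[OF assms(2)] by (auto intro: cong_trans)
    then have "[\<beta> * - m * of_bool (i = j) + \<alpha> * M i j = \<gamma> * of_bool (i = j) + \<delta> * M i j] (mod k)"
      using cong_sym[OF assms(3)] by (intro cong_add cong_mult cong_refl)
    moreover have "vec_mat n (row_comb \<alpha> \<beta> i) M j = \<beta> * - m * of_bool (i = j) + \<alpha> * M i j"
      using vec_mat_row_comb[OF assms(1) 2(2)] by (simp add: algebra_simps)
    moreover have "join_vec n (row_comb \<alpha> \<beta> i) (row_comb \<gamma> \<delta> i) l = \<gamma> * of_bool (i = j) + \<delta> * M i j"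
      using 2 by (simp add: join_vec_def row_comb_def)
    ultimately show ?thesis
      using 2 by (simp add: codeword_high cong_sym_eq)
  next
    case 3
    then show ?thesis by (simp add: join_vec_beyond codeword_def)
  qed
qed

lemma frame_row_in_constrA:
  assumes "[a = d] (mod k)" "[b = c] (mod k)" "i < 2*n"
  shows "(\<lambda>l. of_int (frame_row a b c d i l) / sqrt (of_int k)) \<in> constrA k (2*n) (C_k k n M)"
  using assms(3)
proof (cases rule: less_double_cases)
  case 1
  then show ?thesis
    using assms by (simp add: frame_row_def join_row_comb_in_constrA cong_sym)
next
  case (2 i')
  then show ?thesis
    using assms by (simp add: frame_row_def join_row_comb_in_constrA cong_minus_minus_iff)
qed

theorem is_frame_F_mat:
  assumes "[a = d] (mod k)" "[b = c] (mod k)"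
  shows "is_frame (2*n) (constrA k (2*n) (C_k k n M))
    (of_int (a^2 + m * b^2 + c^2 + m * d^2) / of_int k) (F_mat k n M a b c d)"
  unfolding is_frame_def
  using assms modulus_pos
  by (simp add: F_mat_eq_frame_row frame_row_in_constrA vinner_scaled_int sum_frame_row_mult)

end

theorem proposition3p6:
  fixes k m a b c d :: int and n :: nat and M :: "nat \<Rightarrow> nat \<Rightarrow> int"
  assumes "k \<ge> 2"
    and "\<forall>i<n. \<forall>j<n. M i j \<in> {- (k div 2) .. k div 2}"
    and "\<forall>i<n. \<forall>j<n. M j i = - M i j"
    and "\<forall>i<n. \<forall>j<n. (\<Sum>l<n. M i l * M j l) = (if i = j then m else 0)"
    and "m mod k = (-1) mod k"
    and "a mod k = d mod k" and "b mod k = c mod k"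
  shows "self_dual_code k (2*n) (C_k k n M)
       \<and> unimodular (2*n) (constrA k (2*n) (C_k k n M))
       \<and> is_frame (2*n) (constrA k (2*n) (C_k k n M))
           ((of_int a ^ 2 + of_int m * of_int b ^ 2 + of_int c ^ 2 + of_int m * of_int d ^ 2) / of_int k)
           (F_mat k n M a b c d)"
proof -
  \<comment> \<open>The bound on the entries of \<open>M\<close> is not needed: they are only used modulo \<open>k\<close>.\<close>
  interpret skew_orthogonal_mod n m M k
  proof
    show "M j i = - M i j" if "i < n" "j < n" for i j
      using assms(3) that by blast
    show "(\<Sum>l<n. M i l * M j l) = of_bool (i = j) * m" if "i < n" "j < n" for i j
      using assms(4) that by simp
    show "k > 0"
      using assms(1) by simp
    show "[m = - 1] (mod k)"
      using assms(5) by (simp add: cong_def)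
  qed
  have "[a = d] (mod k)" "[b = c] (mod k)"
    using assms(6,7) by (simp_all add: cong_def)
  then show ?thesis
    using self_dual_code_C_k unimodular_constrA_self_dual[OF modulus_pos self_dual_code_C_k]
      is_frame_F_mat by simp
qed

end
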